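(* Let $X$ be an $n\times p$ real matrix ($n \ge p$) whose columns have $\ell_2$-norm $1$, such that $X^T X$ is invertible, and let $Y\in\mathbb{R}^n$. Let $M=(X^TX)^{-1}$ and suppose that $M$ is strictly diagonally dominant: $$M_{jj} > \sum_{i\neq j} |M_{ij}| \quad \text{for all } j=1,\dots,p.$$ For $\lambda>0$, the Lasso solution is the minimizer of $$\min_{\beta\in\mathbb{R}^p} \tfrac12 \|Y-X\beta\|_2^2 + \lambda\|\beta\|_1,$$ and the Dantzig solution is the minimizer of $$\min_{\beta\in\mathbb{R}^p} \|\beta\|_1 \quad\text{subject to}\quad \|X^T(Y-X\beta)\|_\infty \le \lambda.$$ Then for every $\lambda>0$ the Lasso solution and the Dantzig solution are identical, i.e., the Lasso and Dantzig regularization paths $\lambda\mapsto\hat\beta_\lambda$ coincide.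
   Context: $\|\cdot\|_1$, $\|\cdot\|_2$, $\|\cdot\|_\infty$ denote the usual $\ell_1$, $\ell_2$, $\ell_\infty$ norms on Euclidean space. The normalization of the columns of $X$ to unit $\ell_2$-norm is a standing assumption of the paper. *)

theory Defs
  imports "HOL-Analysis.Analysis"
begin

definition l1norm :: "real ^ 'n \<Rightarrow> real" where
  "l1norm v = (\<Sum>i\<in>UNIV. \<bar>v $ i\<bar>)"

definition linfnorm :: "real ^ 'n \<Rightarrow> real" where
  "linfnorm v = Max (range (\<lambda>i. \<bar>v $ i\<bar>))"

definition lasso_obj :: "real ^ 'p ^ 'n \<Rightarrow> real ^ 'n \<Rightarrow> real \<Rightarrow> real ^ 'p \<Rightarrow> real" where
  "lasso_obj X Y lam b = (1/2) * (norm (Y - X *v b))\<^sup>2 + lam * l1norm b"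

definition is_lasso_solution :: "real ^ 'p ^ 'n \<Rightarrow> real ^ 'n \<Rightarrow> real \<Rightarrow> real ^ 'p \<Rightarrow> bool" where
  "is_lasso_solution X Y lam b \<longleftrightarrow> (\<forall>b'. lasso_obj X Y lam b \<le> lasso_obj X Y lam b')"

definition dantzig_feasible :: "real ^ 'p ^ 'n \<Rightarrow> real ^ 'n \<Rightarrow> real \<Rightarrow> real ^ 'p \<Rightarrow> bool" where
  "dantzig_feasible X Y lam b \<longleftrightarrow> linfnorm (transpose X *v (Y - X *v b)) \<le> lam"

definition is_dantzig_solution :: "real ^ 'p ^ 'n \<Rightarrow> real ^ 'n \<Rightarrow> real \<Rightarrow> real ^ 'p \<Rightarrow> bool" where
  "is_dantzig_solution X Y lam b \<longleftrightarrow> dantzig_feasible X Y lam b \<and>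
     (\<forall>b'. dantzig_feasible X Y lam b' \<longrightarrow> l1norm b \<le> l1norm b')"

end

theory Submission
  imports Defs
begin

text \<open>
  The Lasso objective is strictly convex when the Gram matrix \<open>G = X\<^sup>T X\<close> is invertible, and its
  unique minimiser is characterised by the KKT conditions: the correlation \<open>X\<^sup>T (Y - X b)\<close> of
  the residual is bounded by \<open>\<lambda>\<close> in every coordinate and equals \<open>\<lambda> sgn b\<^sub>j\<close> on the support.
  Every Dantzig solution satisfies the first condition by feasibility. If it violated the
  second at some \<open>j\<close> in its support, moving along the \<open>j\<close>-th column of \<open>M = G\<^sup>-\<^sup>1\<close> would
  change the correlation only in coordinate \<open>j\<close>, keeping feasibility, while strict diagonal
  dominance of \<open>M\<close> makes the \<open>\<ell>\<^sub>1\<close>-norm decrease. So Dantzig solutions (which exist by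
  compactness of the feasible set) are Lasso solutions, and uniqueness of the latter gives
  the converse.
\<close>

definition residual_corr :: "real ^ 'p ^ 'n \<Rightarrow> real ^ 'n \<Rightarrow> real ^ 'p \<Rightarrow> real ^ 'p" where
  "residual_corr X Y b = transpose X *v (Y - X *v b)"

definition lasso_kkt :: "real ^ 'p ^ 'n \<Rightarrow> real ^ 'n \<Rightarrow> real \<Rightarrow> real ^ 'p \<Rightarrow> bool" where
  "lasso_kkt X Y lam b \<longleftrightarrow>
     (\<forall>j. \<bar>residual_corr X Y b $ j\<bar> \<le> lam) \<and>
     (\<forall>j. b $ j \<noteq> 0 \<longrightarrow> residual_corr X Y b $ j = lam * sgn (b $ j))"

lemma linfnorm_le_iff: "linfnorm (v :: real ^ 'n) \<le> c \<longleftrightarrow> (\<forall>i. \<bar>v $ i\<bar> \<le> c)"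
  unfolding linfnorm_def by (subst Max_le_iff) auto

lemma dantzig_feasible_iff:
  "dantzig_feasible X Y lam b \<longleftrightarrow> (\<forall>j. \<bar>residual_corr X Y b $ j\<bar> \<le> lam)"
  unfolding dantzig_feasible_def residual_corr_def linfnorm_le_iff ..

lemma
  fixes A :: "real ^ 'n ^ 'n"
  assumes "invertible A"
  shows matrix_inv_right: "A ** matrix_inv A = mat 1"
    and matrix_inv_left: "matrix_inv A ** A = mat 1"
proof -
  from assms obtain A' where "A ** A' = mat 1 \<and> A' ** A = mat 1"
    unfolding invertible_def by blast
  then have "A ** matrix_inv A = mat 1 \<and> matrix_inv A ** A = mat 1"
    unfolding matrix_inv_def by (rule someI)
  then show "A ** matrix_inv A = mat 1" "matrix_inv A ** A = mat 1" by auto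
qed

lemma residual_corr_diff:
  "residual_corr X Y (b - d) = residual_corr X Y b + (transpose X ** X) *v d"
  unfolding residual_corr_def
  by (simp add: matrix_vector_mul_assoc algebra_simps)

lemma residual_corr_diff_matrix_inv_column:
  fixes X :: "real ^ 'p ^ 'n"
  assumes "invertible (transpose X ** X)"
  shows "residual_corr X Y (b - c *s column j (matrix_inv (transpose X ** X)))
           = residual_corr X Y b + c *s axis j 1"
proof -
  have "(transpose X ** X) *v column j (matrix_inv (transpose X ** X)) = axis j 1"
    using matrix_inv_right[OF assms]
    by (simp add: matrix_vector_mult_basis[symmetric] matrix_vector_mul_assoc)
  then show ?thesis
    by (simp add: residual_corr_diff scalar_mult_eq_scaleR matrix_vector_mult_scaleR)
qed

lemma matrix_vector_eq_0_if_gram_invertible: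
  fixes X :: "real ^ 'p ^ 'n"
  assumes "invertible (transpose X ** X)" and "X *v d = 0"
  shows "d = 0"
proof -
  have "(transpose X ** X) *v d = 0"
    using assms(2) by (simp flip: matrix_vector_mul_assoc)
  then have "(matrix_inv (transpose X ** X) ** (transpose X ** X)) *v d = 0"
    by (simp flip: matrix_vector_mul_assoc)
  then show ?thesis
    using matrix_inv_left[OF assms(1)] by simp
qed

lemma sgn_subgradient_abs:
  fixes r s t :: real
  assumes "\<bar>r\<bar> \<le> lam" and "s \<noteq> 0 \<Longrightarrow> r = lam * sgn s"
  shows "r * (t - s) \<le> lam * (\<bar>t\<bar> - \<bar>s\<bar>)"
proof (cases "s = 0")
  case True
  have "r * t \<le> \<bar>r\<bar> * \<bar>t\<bar>" by (metis abs_ge_self abs_mult)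
  also have "\<dots> \<le> lam * \<bar>t\<bar>" using assms(1) by (simp add: mult_right_mono)
  finally show ?thesis using True by simp
next
  case False
  then have "lam \<ge> 0" and "r = lam * sgn s" using assms by auto
  moreover have "sgn s * (t - s) \<le> \<bar>t\<bar> - \<bar>s\<bar>"
    by (cases s "0::real" rule: linorder_cases) (auto simp: sgn_if)
  ultimately show ?thesis by (metis mult.assoc mult_left_mono)
qed

lemma lasso_obj_ge_if_kkt:
  assumes "lasso_kkt X Y lam b"
  shows "lasso_obj X Y lam b' \<ge> lasso_obj X Y lam b + (1/2) * (norm (X *v (b' - b)))\<^sup>2"
proof -
  define r where "r = residual_corr X Y b"
  define e where "e = Y - X *v b"
  define d where "d = b' - b"
  have "Y - X *v b' = e - X *v d"
    unfolding e_def d_def by (simp add: matrix_vector_mult_diff_distrib)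
  then have "(norm (Y - X *v b'))\<^sup>2 = (norm e)\<^sup>2 - 2 * (e \<bullet> (X *v d)) + (norm (X *v d))\<^sup>2"
    by (simp add: power2_norm_eq_inner inner_diff_left inner_diff_right inner_commute)
  moreover have "e \<bullet> (X *v d) = r \<bullet> d"
    unfolding r_def e_def residual_corr_def by (simp add: dot_lmul_matrix)
  ultimately have expand: "(norm (Y - X *v b'))\<^sup>2 = (norm e)\<^sup>2 - 2 * (r \<bullet> d) + (norm (X *v d))\<^sup>2"
    by simp
  have "r \<bullet> d = (\<Sum>i\<in>UNIV. r $ i * (b' $ i - b $ i))"
    unfolding d_def by (simp add: inner_vec_def)
  also have "\<dots> \<le> (\<Sum>i\<in>UNIV. lam * (\<bar>b' $ i\<bar> - \<bar>b $ i\<bar>))"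
    using assms unfolding lasso_kkt_def r_def by (intro sum_mono sgn_subgradient_abs) auto
  also have "\<dots> = lam * l1norm b' - lam * l1norm b"
    by (simp add: l1norm_def sum_distrib_left sum_subtractf algebra_simps)
  finally show ?thesis
    using expand unfolding lasso_obj_def e_def d_def by linarith
qed

lemma is_lasso_solution_if_kkt:
  "lasso_kkt X Y lam b \<Longrightarrow> is_lasso_solution X Y lam b"
  unfolding is_lasso_solution_def
proof
  fix b'
  assume "lasso_kkt X Y lam b"
  from lasso_obj_ge_if_kkt[OF this, of b']
  show "lasso_obj X Y lam b \<le> lasso_obj X Y lam b'"
    using zero_le_power2[of "norm (X *v (b' - b))"] by linarith
qed

lemma lasso_solution_unique_if_kkt:
  fixes X :: "real ^ 'p ^ 'n"
  assumes "invertible (transpose X ** X)" "lasso_kkt X Y lam b" "is_lasso_solution X Y lam b'"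
  shows "b' = b"
proof -
  have "lasso_obj X Y lam b' \<le> lasso_obj X Y lam b"
    using assms(3) unfolding is_lasso_solution_def by blast
  then have "(norm (X *v (b' - b)))\<^sup>2 \<le> 0"
    using lasso_obj_ge_if_kkt[OF assms(2), of b'] by linarith
  then have "X *v (b' - b) = 0" by simp
  then show ?thesis
    using matrix_vector_eq_0_if_gram_invertible[OF assms(1)] by fastforce
qed

lemma dantzig_solution_exists:
  fixes X :: "real ^ 'p ^ 'n"
  assumes "invertible (transpose X ** X)" and "lam \<ge> 0"
  shows "\<exists>b. is_dantzig_solution X Y lam b"
proof -
  define G where "G = transpose X ** X"
  define c where "c = transpose X *v Y"
  define B where "B = cbox (- (\<chi> i. lam)) ((\<chi> i. lam) :: real ^ 'p)"
  define S where "S = (\<lambda>r. matrix_inv G *v (c - r)) ` B"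
  have in_B: "r \<in> B \<longleftrightarrow> (\<forall>i. \<bar>r $ i\<bar> \<le> lam)" for r
    unfolding B_def mem_box_cart by (simp add: abs_le_iff) (meson minus_le_iff)
  have corr: "residual_corr X Y b = c - G *v b" for b
    unfolding residual_corr_def c_def G_def
    by (simp add: matrix_vector_mult_diff_distrib matrix_vector_mul_assoc)
  have feasible_iff: "dantzig_feasible X Y lam b \<longleftrightarrow> b \<in> S" for b
  proof
    assume "dantzig_feasible X Y lam b"
    then have "c - G *v b \<in> B" unfolding dantzig_feasible_iff corr in_B .
    moreover have "b = matrix_inv G *v (c - (c - G *v b))"
      using matrix_inv_left[OF assms(1)] by (simp add: matrix_vector_mul_assoc G_def)
    ultimately show "b \<in> S" unfolding S_def by blast
  next
    assume "b \<in> S"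
    then obtain r where "r \<in> B" "b = matrix_inv G *v (c - r)" unfolding S_def by blast
    moreover have "c - G *v (matrix_inv G *v (c - r)) = r"
      using matrix_inv_right[OF assms(1)] by (simp add: matrix_vector_mul_assoc G_def)
    ultimately show "dantzig_feasible X Y lam b"
      unfolding dantzig_feasible_iff corr in_B by simp
  qed
  have "compact S"
    unfolding S_def B_def
    by (intro compact_continuous_image compact_cbox
        continuous_on_compose2[OF matrix_vector_mult_linear_continuous_on[of UNIV "matrix_inv G"]])
      (auto intro!: continuous_intros)
  moreover have "S \<noteq> {}"
  proof -
    have "0 \<in> B" using in_B assms(2) by simp
    then show ?thesis unfolding S_def by blast
  qed
  moreover have "continuous_on S l1norm"
    unfolding l1norm_def by (intro continuous_intros)
  ultimately obtain b where "b \<in> S" "\<forall>b'\<in>S. l1norm b \<le> l1norm b'"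
    using continuous_attains_inf by blast
  then show ?thesis
    unfolding is_dantzig_solution_def feasible_iff by blast
qed

lemma l1norm_diff_sgn_scaleR_le:
  fixes b v :: "real ^ 'p"
  assumes "b $ j \<noteq> 0" "t \<ge> 0" "t * v $ j \<le> \<bar>b $ j\<bar>"
  shows "l1norm (b - (t * sgn (b $ j)) *s v)
           \<le> l1norm b - t * (v $ j - (\<Sum>i\<in>UNIV - {j}. \<bar>v $ i\<bar>))"
proof -
  let ?b' = "b - (t * sgn (b $ j)) *s v"
  have component: "?b' $ i = b $ i - t * sgn (b $ j) * v $ i" for i
    by simp
  have "\<bar>?b' $ j\<bar> = \<bar>sgn (b $ j) * (\<bar>b $ j\<bar> - t * v $ j)\<bar>"
    unfolding component by (simp add: sgn_mult_abs right_diff_distrib mult.left_commute)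
  also have "\<dots> = \<bar>b $ j\<bar> - t * v $ j"
    using assms by (simp add: abs_mult abs_sgn_eq)
  finally have at_j: "\<bar>?b' $ j\<bar> = \<bar>b $ j\<bar> - t * v $ j" .
  have off_j: "\<bar>?b' $ i\<bar> \<le> \<bar>b $ i\<bar> + t * \<bar>v $ i\<bar>" for i
  proof -
    have "\<bar>t * sgn (b $ j) * v $ i\<bar> = t * \<bar>v $ i\<bar>"
      using assms(1,2) by (simp add: abs_mult abs_sgn_eq)
    then show ?thesis
      unfolding component using abs_triangle_ineq4[of "b $ i" "t * sgn (b $ j) * v $ i"]
      by linarith
  qed
  have "l1norm ?b' = \<bar>?b' $ j\<bar> + (\<Sum>i\<in>UNIV - {j}. \<bar>?b' $ i\<bar>)"
    unfolding l1norm_def by (simp add: sum.remove)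
  also have "\<dots> \<le> \<bar>b $ j\<bar> - t * v $ j + (\<Sum>i\<in>UNIV - {j}. \<bar>b $ i\<bar> + t * \<bar>v $ i\<bar>)"
    unfolding at_j by (intro add_left_mono sum_mono off_j)
  also have "\<dots> = l1norm b - t * (v $ j - (\<Sum>i\<in>UNIV - {j}. \<bar>v $ i\<bar>))"
    unfolding l1norm_def by (simp add: sum.distrib sum_distrib_left sum.remove algebra_simps)
  finally show ?thesis .
qed

lemma dantzig_solution_kkt:
  fixes X :: "real ^ 'p ^ 'n"
  defines "M \<equiv> matrix_inv (transpose X ** X)"
  assumes inv: "invertible (transpose X ** X)"
    and diag_dom: "\<And>j. M $ j $ j > (\<Sum>i\<in>UNIV - {j}. \<bar>M $ i $ j\<bar>)"
    and dantzig: "is_dantzig_solution X Y lam b"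
  shows "lasso_kkt X Y lam b"
proof -
  let ?r = "residual_corr X Y b"
  have feasible: "\<And>i. \<bar>?r $ i\<bar> \<le> lam"
    using dantzig unfolding is_dantzig_solution_def dantzig_feasible_iff by blast
  have "?r $ j = lam * sgn (b $ j)" if "b $ j \<noteq> 0" for j
  proof (rule ccontr)
    assume "?r $ j \<noteq> lam * sgn (b $ j)"
    define \<sigma> where "\<sigma> = sgn (b $ j)"
    define v where "v = column j M"
    have \<sigma>: "\<sigma> = 1 \<or> \<sigma> = -1" using that unfolding \<sigma>_def by (auto simp: sgn_if)
    have slack: "\<sigma> * ?r $ j < lam" "- lam \<le> \<sigma> * ?r $ j"
      using feasible[of j] \<open>?r $ j \<noteq> lam * sgn (b $ j)\<close> \<sigma>
      unfolding \<sigma>_def[symmetric] by (auto simp: abs_if split: if_splits)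
    have "(\<Sum>i\<in>UNIV - {j}. \<bar>M $ i $ j\<bar>) \<ge> 0" by (simp add: sum_nonneg)
    then have "M $ j $ j > 0" using diag_dom[of j] by linarith
    then have vj: "v $ j > 0" by (simp add: v_def column_def)
    \<comment> \<open>the largest step keeping coordinate \<open>j\<close> both feasible and of the same sign\<close>
    define t where "t = min (lam - \<sigma> * ?r $ j) (\<bar>b $ j\<bar> / v $ j)"
    have t: "t > 0" "t \<le> lam - \<sigma> * ?r $ j" "t * v $ j \<le> \<bar>b $ j\<bar>"
      using slack vj that by (auto simp: t_def min_def field_simps)
    define b' where "b' = b - (t * \<sigma>) *s v"
    have corr': "residual_corr X Y b' = ?r + (t * \<sigma>) *s axis j 1"
      unfolding b'_def v_def M_def by (rule residual_corr_diff_matrix_inv_column[OF inv])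
    have "dantzig_feasible X Y lam b'"
      unfolding dantzig_feasible_iff corr'
      using feasible slack t \<sigma> by (auto simp: axis_def)
    then have "l1norm b \<le> l1norm b'"
      using dantzig unfolding is_dantzig_solution_def by blast
    moreover have "l1norm b' \<le> l1norm b - t * (v $ j - (\<Sum>i\<in>UNIV - {j}. \<bar>v $ i\<bar>))"
      unfolding b'_def \<sigma>_def using l1norm_diff_sgn_scaleR_le[OF that] t by simp
    moreover have "t * (v $ j - (\<Sum>i\<in>UNIV - {j}. \<bar>v $ i\<bar>)) > 0"
      using t diag_dom[of j] unfolding v_def column_def by simp
    ultimately show False by linarith
  qed
  then show ?thesis
    unfolding lasso_kkt_def using feasible by blast
qed

theorem theorem1:
  fixes X :: "real ^ 'p ^ 'n" and Y :: "real ^ 'n"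
  assumes "CARD('p) \<le> CARD('n)"
    and "\<And>j. norm (column j X) = 1"
    and inv: "invertible (transpose X ** X)"
    and diag_dom: "\<And>j. matrix_inv (transpose X ** X) $ j $ j >
               (\<Sum>i\<in>UNIV - {j}. \<bar>matrix_inv (transpose X ** X) $ i $ j\<bar>)"
  shows "\<forall>lam > 0. \<forall>b. is_lasso_solution X Y lam b \<longleftrightarrow> is_dantzig_solution X Y lam b"
proof (intro allI impI)
  fix lam :: real and b
  assume "lam > 0"
  then obtain d where dantzig_d: "is_dantzig_solution X Y lam d"
    using dantzig_solution_exists[OF inv] by fastforce
  have kkt: "is_dantzig_solution X Y lam b' \<Longrightarrow> lasso_kkt X Y lam b'" for b'
    using dantzig_solution_kkt[OF inv diag_dom] .
  show "is_lasso_solution X Y lam b \<longleftrightarrow> is_dantzig_solution X Y lam b"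
  proof
    assume "is_lasso_solution X Y lam b"
    then have "b = d"
      by (rule lasso_solution_unique_if_kkt[OF inv kkt[OF dantzig_d]])
    then show "is_dantzig_solution X Y lam b" using dantzig_d by simp
  next
    assume "is_dantzig_solution X Y lam b"
    then show "is_lasso_solution X Y lam b" by (intro is_lasso_solution_if_kkt kkt)
  qed
qed

end
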